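(* Let $P[1..m]$ and $S[1..m]$ be strings of the same length $m$ over a totally ordered alphabet. Then $CT(P)=CT(S)$ if and only if $S[\mathcal{GP}_P(i)]\preceq S[i]$ for all $1\le i\le m$.
   Context: A string $S$ is a finite sequence $S[1],S[2],\dots$ over an alphabet $\Sigma$ with a total order $<$; $S[i..j]$ denotes the substring $S[i]\cdots S[j]$ (empty if $i>j$). For positions $i,j$ of $S$, write $S[i]\prec S[j]$ iff either $S[i]<S[j]$, or $S[i]$ and $S[j]$ have the same value and $i<j$; write $S[i]\preceq S[j]$ iff $S[i]\prec S[j]$ or $i=j$. Minimum elements are taken with respect to $\prec$ (leftmost among equal minimal values). Cartesian tree $CT(S)$ of $S[1..n]$: if $S$ is empty, $CT(S)$ is the empty tree; otherwise, if $S[i]$ is the minimum of $S$, $CT(S)$ is the binary tree with root $S[i]$, left subtree $CT(S[1..i-1])$ and right subtree $CT(S[i+1..n])$. Two Cartesian trees are equal when they are equal as (unlabeled, ordered) binary tree shapes. Prefix-parent representation: $\mathcal{PP}_S(i)=\max\{j: 1\le j<i,\ S[j]\prec S[i]\}$ if such $j$ exists, and $\mathcal{PP}_S(i)=i$ otherwise. Prefix-child representation: $\mathcal{PC}_S(1)=1$, and for $i\ge 2$: if $\mathcal{PP}_S(i)=i$, then $\mathcal{PC}_S(i)$ is the index $j\in[1,i-1]$ such that $S[j]$ is the minimum of $S[1..i-1]$; if $\mathcal{PP}_S(i)=i-1$, then $\mathcal{PC}_S(i)=i$; if $\mathcal{PP}_S(i)<i-1$, then $\mathcal{PC}_S(i)$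 is the index $j$ with $\mathcal{PP}_S(i)<j<i$ such that $S[j]$ is the minimum of $S[\mathcal{PP}_S(i)+1..i-1]$. Global-parent representation: $\mathcal{GP}_S(i)=j$ if there is an index $j>i$ with $\mathcal{PC}_S(j)=i$ (there is at most one such $j$), and $\mathcal{GP}_S(i)=\mathcal{PP}_S(i)$ otherwise. *)

theory Defs
  imports Main
begin

text \<open>Strings are lists over a linearly ordered alphabet; positions are 1-based:
  position i of S (1 \<le> i \<le> length S) is  S ! (i - 1).\<close>

definition at :: "'a list \<Rightarrow> nat \<Rightarrow> 'a" where
  "at S i = S ! (i - 1)"

definition prec :: "'a::linorder list \<Rightarrow> nat \<Rightarrow> nat \<Rightarrow> bool" where
  "prec S i j \<longleftrightarrow> at S i < at S j \<or> (at S i = at S j \<and> i < j)"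

definition preceq :: "'a::linorder list \<Rightarrow> nat \<Rightarrow> nat \<Rightarrow> bool" where
  "preceq S i j \<longleftrightarrow> prec S i j \<or> i = j"

datatype btree = Leaf | Node btree btree

text \<open>0-based index of the leftmost minimum of a nonempty list.\<close>
definition minidx :: "'a::linorder list \<Rightarrow> nat" where
  "minidx S = (LEAST k. k < length S \<and> (\<forall>j < length S. S ! k \<le> S ! j))"

lemma minidx_less: "S \<noteq> [] \<Longrightarrow> minidx (S::'a::linorder list) < length S"
proof -
  assume "S \<noteq> []"
  then have "Min (set S) \<in> set S" by simp
  then obtain k where k: "k < length S" "S ! k = Min (set S)" by (metis in_set_conv_nth)
  have "\<forall>j < length S. S ! k \<le> S ! j" using k by simp
  with k(1) have "minidx S < length S \<and> (\<forall>j < length S. S ! minidx S \<le> S ! j)"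
    unfolding minidx_def by (intro LeastI[where P="\<lambda>k. k < length S \<and> (\<forall>j < length S. S ! k \<le> S ! j)"]) simp
  then show ?thesis by simp
qed

function CT :: "'a::linorder list \<Rightarrow> btree" where
  "CT S = (if S = [] then Leaf
           else Node (CT (take (minidx S) S)) (CT (drop (Suc (minidx S)) S)))"
  by pat_completeness auto
termination
  by (relation "measure length") (auto dest: minidx_less)

declare CT.simps[simp del]

text \<open>Leftmost minimum position (1-based) of S[a..b] (assumed nonempty).\<close>
definition argmin_range :: "'a::linorder list \<Rightarrow> nat \<Rightarrow> nat \<Rightarrow> nat" where
  "argmin_range S a b = (LEAST j. a \<le> j \<and> j \<le> b \<and> (\<forall>k. a \<le> k \<and> k \<le> b \<longrightarrow> at S j \<le> at S k))"

definition PP :: "'a::linorder list \<Rightarrow> nat \<Rightarrow> nat" where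
  "PP S i = (if \<exists>j. 1 \<le> j \<and> j < i \<and> prec S j i
             then GREATEST j. 1 \<le> j \<and> j < i \<and> prec S j i else i)"

definition PC :: "'a::linorder list \<Rightarrow> nat \<Rightarrow> nat" where
  "PC S i = (if i = 1 then 1
             else if PP S i = i then argmin_range S 1 (i - 1)
             else if PP S i = i - 1 then i
             else argmin_range S (PP S i + 1) (i - 1))"

definition GP :: "'a::linorder list \<Rightarrow> nat \<Rightarrow> nat" where
  "GP S i = (if \<exists>j. i < j \<and> j \<le> length S \<and> PC S j = i
             then THE j. i < j \<and> j \<le> length S \<and> PC S j = i else PP S i)"

end

(*
  Equal Cartesian trees means equal range minima: for every range [a..b] the \<prec>-minimum of
  P[a..b] and of S[a..b] sit at the same position (induction along the root decomposition).
  Each GP P i is the range minimum of the range spanned by i and GP P i, which gives necessity.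
  Conversely, if c is the range minimum of the range spanned by c and q, the GP-steps from q are
  \<prec>-descending in P and never leave the region in which c is the minimum, so they reach c;
  the condition makes every step \<prec>-descending in S as well, whence S[c] \<prec> S[q].
*)
theory Submission
  imports Defs
begin

lemma prec_trans: "prec X i j \<Longrightarrow> prec X j k \<Longrightarrow> prec X i k"
  unfolding prec_def by auto

lemma prec_irrefl: "\<not> prec X i i"
  unfolding prec_def by auto

lemma prec_asym: "prec X i j \<Longrightarrow> \<not> prec X j i"
  unfolding prec_def by auto

lemma prec_total: "i \<noteq> j \<Longrightarrow> prec X i j \<or> prec X j i"
  unfolding prec_def by auto

definition is_range_min :: "'a::linorder list \<Rightarrow> nat \<Rightarrow> nat \<Rightarrow> nat \<Rightarrow> bool" where
  "is_range_min X a b c \<longleftrightarrow> a \<le> c \<and> c \<le> b \<and> (\<forall>k. a \<le> k \<and> k \<le> b \<and> k \<noteq> c \<longrightarrow> prec X c k)"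

lemma is_range_min_unique: "is_range_min X a b c \<Longrightarrow> is_range_min X a b c' \<Longrightarrow> c = c'"
  unfolding is_range_min_def using prec_asym by blast

lemma is_range_min_subrange:
  "is_range_min X a b c \<Longrightarrow> a \<le> a' \<Longrightarrow> a' \<le> c \<Longrightarrow> c \<le> b' \<Longrightarrow> b' \<le> b \<Longrightarrow> is_range_min X a' b' c"
  unfolding is_range_min_def by auto

lemma PP_less:
  assumes "PP X i \<noteq> i"
  shows "1 \<le> PP X i" "PP X i < i" "prec X (PP X i) i"
    "\<forall>k. PP X i < k \<and> k < i \<longrightarrow> at X i < at X k"
proof -
  let ?Q = "\<lambda>j. 1 \<le> j \<and> j < i \<and> prec X j i"
  obtain j where "?Q j" using assms unfolding PP_def by (auto split: if_splits)
  then have eq: "PP X i = (GREATEST j. ?Q j)" unfolding PP_def by auto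
  have "?Q (GREATEST j. ?Q j)" by (rule GreatestI_nat[of _ j i]) (use \<open>?Q j\<close> in auto)
  then have "?Q (PP X i)" by (simp only: eq)
  then show "1 \<le> PP X i" "PP X i < i" "prec X (PP X i) i" by auto
  have "at X i < at X k" if "PP X i < k" "k < i" for k
  proof (rule ccontr)
    assume "\<not> at X i < at X k"
    then have "prec X k i" using that(2) unfolding prec_def by auto
    then have "k \<le> PP X i" using Greatest_le_nat[of ?Q k i] that eq by auto
    then show False using that by simp
  qed
  then show "\<forall>k. PP X i < k \<and> k < i \<longrightarrow> at X i < at X k" by blast
qed

lemma PP_self_iff: "PP X i = i \<longleftrightarrow> (\<forall>k. 1 \<le> k \<and> k < i \<longrightarrow> at X i < at X k)"
proof
  assume PP: "PP X i = i"
  show "\<forall>k. 1 \<le> k \<and> k < i \<longrightarrow> at X i < at X k"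
  proof (intro allI impI)
    fix k assume k: "1 \<le> k \<and> k < i"
    let ?Q = "\<lambda>j. 1 \<le> j \<and> j < i \<and> prec X j i"
    show "at X i < at X k"
    proof (rule ccontr)
      assume "\<not> at X i < at X k"
      then have "?Q k" using k unfolding prec_def by auto
      then have "?Q (GREATEST j. ?Q j)" by (rule GreatestI_nat[of _ _ i]) auto
      moreover have "PP X i = (GREATEST j. ?Q j)" using \<open>?Q k\<close> unfolding PP_def by auto
      ultimately show False using PP by simp
    qed
  qed
next
  assume "\<forall>k. 1 \<le> k \<and> k < i \<longrightarrow> at X i < at X k"
  then show "PP X i = i"
    unfolding PP_def prec_def by auto
qed

lemma PP_eqI:
  assumes "1 \<le> p" "p < i" "prec X p i" "\<forall>k. p < k \<and> k < i \<longrightarrow> at X i < at X k"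
  shows "PP X i = p"
proof -
  let ?Q = "\<lambda>j. 1 \<le> j \<and> j < i \<and> prec X j i"
  have "(GREATEST j. ?Q j) = p"
    by (rule Greatest_equality) (use assms in \<open>auto simp: prec_def not_less[symmetric]\<close>)
  then show ?thesis using assms unfolding PP_def by auto
qed

lemma argmin_range_props:
  assumes "a \<le> b"
  shows "a \<le> argmin_range X a b" "argmin_range X a b \<le> b"
    "\<forall>k. a \<le> k \<and> k \<le> b \<longrightarrow> at X (argmin_range X a b) \<le> at X k"
    "\<forall>k. a \<le> k \<and> k < argmin_range X a b \<longrightarrow> at X (argmin_range X a b) < at X k"
proof -
  let ?Q = "\<lambda>j. a \<le> j \<and> j \<le> b \<and> (\<forall>k. a \<le> k \<and> k \<le> b \<longrightarrow> at X j \<le> at X k)"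
  have fin: "finite (at X ` {a..b})" and ne: "at X ` {a..b} \<noteq> {}"
    using assms by auto
  obtain j where j: "j \<in> {a..b}" "at X j = Min (at X ` {a..b})"
    using Min_in[OF fin ne] by auto
  have "?Q j" using j fin by auto
  then have Q: "?Q (argmin_range X a b)"
    unfolding argmin_range_def by (rule LeastI)
  then show "a \<le> argmin_range X a b" "argmin_range X a b \<le> b"
    "\<forall>k. a \<le> k \<and> k \<le> b \<longrightarrow> at X (argmin_range X a b) \<le> at X k"
    by auto
  show "\<forall>k. a \<le> k \<and> k < argmin_range X a b \<longrightarrow> at X (argmin_range X a b) < at X k"
  proof (intro allI impI)
    fix k assume k: "a \<le> k \<and> k < argmin_range X a b"
    then have "\<not> ?Q k"
      unfolding argmin_range_def using not_less_Least by blast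
    then obtain k' where "a \<le> k'" "k' \<le> b" "at X k' < at X k"
      using k Q by force
    then show "at X (argmin_range X a b) < at X k" using Q by force
  qed
qed

lemma argmin_range_eqI:
  assumes "a \<le> c" "c \<le> b" "\<forall>k. a \<le> k \<and> k \<le> b \<longrightarrow> at X c \<le> at X k"
    "\<forall>k. a \<le> k \<and> k < c \<longrightarrow> at X c < at X k"
  shows "argmin_range X a b = c"
  unfolding argmin_range_def
  by (rule Least_equality) (use assms in \<open>auto, metis leD not_le_imp_less\<close>)

text \<open>The witness \<open>lo\<close> is \<open>PP X j\<close>, or 0 if j has no prefix parent.\<close>
lemma PC_less:
  assumes "PC X j = q" "q < j"
  shows "\<exists>lo. lo < q \<and> (lo = 0 \<or> 1 \<le> lo \<and> prec X lo j) \<and>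
    (\<forall>k. lo < k \<and> k < j \<longrightarrow> at X j < at X k) \<and>
    (\<forall>k. lo < k \<and> k < j \<longrightarrow> at X q \<le> at X k) \<and>
    (\<forall>k. lo < k \<and> k < q \<longrightarrow> at X q < at X k)"
proof -
  have "j \<noteq> 1" using assms unfolding PC_def by auto
  show ?thesis
  proof (cases "PP X j = j")
    case True
    then have q: "q = argmin_range X 1 (j - 1)"
      using assms \<open>j \<noteq> 1\<close> unfolding PC_def by auto
    have "1 \<le> j - 1" using \<open>j \<noteq> 1\<close> assms by auto
    note A = argmin_range_props[OF this, of X, folded q]
    show ?thesis
      by (rule exI[of _ 0]) (use A True in \<open>auto simp: PP_self_iff Suc_le_eq\<close>)
  next
    case False
    note P = PP_less[OF False]
    have "PP X j \<noteq> j - 1" using assms \<open>j \<noteq> 1\<close> False unfolding PC_def by auto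
    then have q: "q = argmin_range X (PP X j + 1) (j - 1)"
      using assms \<open>j \<noteq> 1\<close> False unfolding PC_def by auto
    have "PP X j + 1 \<le> j - 1" using \<open>PP X j \<noteq> j - 1\<close> P by auto
    note A = argmin_range_props[OF this, of X, folded q]
    show ?thesis
      by (rule exI[of _ "PP X j"]) (use A P in \<open>auto simp: Suc_le_eq\<close>)
  qed
qed

lemma is_range_min_PC:
  assumes "PC X j = q" "q < j"
  shows "is_range_min X q j j"
proof -
  obtain lo where "lo < q" "\<forall>k. lo < k \<and> k < j \<longrightarrow> at X j < at X k"
    using PC_less[OF assms] by blast
  then show ?thesis using assms(2) unfolding is_range_min_def prec_def by auto
qed

lemma PC_eqI_PP_self:
  assumes "2 \<le> j" "PP X j = j" "1 \<le> q" "q < j" "\<forall>k. 1 \<le> k \<and> k < j \<longrightarrow> at X q \<le> at X k"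
    "\<forall>k. 1 \<le> k \<and> k < q \<longrightarrow> at X q < at X k"
  shows "PC X j = q"
proof -
  have "argmin_range X 1 (j - 1) = q"
    by (rule argmin_range_eqI) (use assms in auto)
  then show ?thesis using assms unfolding PC_def by auto
qed

lemma PC_eqI:
  assumes "PP X j = p" "1 \<le> p" "p < q" "q < j" "\<forall>k. p < k \<and> k < j \<longrightarrow> at X q \<le> at X k"
    "\<forall>k. p < k \<and> k < q \<longrightarrow> at X q < at X k"
  shows "PC X j = q"
proof -
  have "argmin_range X (p + 1) (j - 1) = q"
    by (rule argmin_range_eqI) (use assms in auto)
  then show ?thesis using assms unfolding PC_def by auto
qed

lemma PC_preimage_unique:
  assumes "q < j1" "q < j2" "PC X j1 = q" "PC X j2 = q"
  shows "j1 = j2"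
proof -
  have no_later: False if jj': "q < j" "j < j'" "PC X j = q" "PC X j' = q" for j j'
  proof -
    obtain lo where "lo < q" "\<forall>k. lo < k \<and> k < j' \<longrightarrow> at X q \<le> at X k"
      using PC_less[OF jj'(4)] jj' by (meson order.strict_trans)
    moreover obtain lo' where "lo' < q" "\<forall>k. lo' < k \<and> k < j \<longrightarrow> at X j < at X k"
      using PC_less[OF jj'(3,1)] by blast
    ultimately have "at X q \<le> at X j" "at X j < at X q" using jj' by auto
    then show False by simp
  qed
  show ?thesis using no_later assms by (metis linorder_neqE_nat)
qed

lemma GP_eqI_PC:
  assumes "q < j" "j \<le> length X" "PC X j = q"
  shows "GP X q = j"
proof -
  have "(THE j. q < j \<and> j \<le> length X \<and> PC X j = q) = j"
    by (rule the_equality) (use assms PC_preimage_unique in blast)+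
  then show ?thesis using assms unfolding GP_def by auto
qed

lemma GP_eq_PP:
  "\<not> (\<exists>j. q < j \<and> j \<le> length X \<and> PC X j = q) \<Longrightarrow> GP X q = PP X q"
  unfolding GP_def by auto

lemma is_range_min_GP:
  assumes "1 \<le> i" "i \<le> length X" "GP X i \<noteq> i"
  shows "1 \<le> GP X i" "GP X i \<le> length X"
    "is_range_min X (min i (GP X i)) (max i (GP X i)) (GP X i)"
proof -
  have "1 \<le> GP X i \<and> GP X i \<le> length X \<and> is_range_min X (min i (GP X i)) (max i (GP X i)) (GP X i)"
  proof (cases "\<exists>j. i < j \<and> j \<le> length X \<and> PC X j = i")
    case True
    then obtain j where j: "i < j" "j \<le> length X" "PC X j = i" by blast
    then show ?thesis
      using GP_eqI_PC[OF j] is_range_min_PC[OF j(3,1)] assms by auto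
  next
    case False
    then have GP: "GP X i = PP X i" by (rule GP_eq_PP)
    then have P: "1 \<le> PP X i" "PP X i < i" "prec X (PP X i) i"
        "\<forall>k. PP X i < k \<and> k < i \<longrightarrow> at X i < at X k"
      using PP_less[of X i] assms by auto
    have "prec X (PP X i) k" if "PP X i < k" "k \<le> i" for k
    proof (cases "k = i")
      case False
      then have "prec X i k" using P(4) that unfolding prec_def by auto
      then show ?thesis using P(3) prec_trans by blast
    qed (use P in simp)
    then have "is_range_min X (PP X i) i (PP X i)"
      unfolding is_range_min_def using P by auto
    then show ?thesis using GP P assms by auto
  qed
  then show "1 \<le> GP X i" "GP X i \<le> length X"
    "is_range_min X (min i (GP X i)) (max i (GP X i)) (GP X i)" by auto
qed

lemma first_smaller_after:
  fixes X :: "'a::linorder list"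
  assumes "q < c" "at X c < at X q"
  obtains j where "q < j" "j \<le> c" "at X j < at X q" "\<forall>k. q < k \<and> k < j \<longrightarrow> at X q \<le> at X k"
proof -
  let ?Q = "\<lambda>j. q < j \<and> j \<le> c \<and> at X j < at X q"
  have "?Q c" using assms by auto
  then have Q: "?Q (LEAST j. ?Q j)" by (rule LeastI)
  have "at X q \<le> at X k" if "q < k" "k < (LEAST j. ?Q j)" for k
    using not_less_Least[OF that(2)] that Q by (auto simp: not_less)
  then show ?thesis using that Q by blast
qed

text \<open>The first position after q smaller than q is a prefix-child preimage of q, provided the
  prefix parent of q does not stand in the way.\<close>
lemma PC_preimage_exists:
  assumes "1 \<le> q" "q < c" "is_range_min X q c c" "PP X q = q \<or> prec X (PP X q) c"
  shows "\<exists>j. q < j \<and> j \<le> c \<and> PC X j = q"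
proof -
  have "at X c < at X q"
    using assms(2,3) unfolding is_range_min_def prec_def by auto
  then obtain j where j: "q < j" "j \<le> c" "at X j < at X q"
      "\<forall>k. q < k \<and> k < j \<longrightarrow> at X q \<le> at X k"
    using first_smaller_after assms(2) by blast
  have "j = c \<or> prec X c j"
    using assms(3) j unfolding is_range_min_def by auto
  have after_q: "at X j < at X k \<and> at X q \<le> at X k" if "q \<le> k" "k < j" for k
    using j that by (cases "k = q") (auto intro: less_le_trans)
  show ?thesis
  proof (cases "PP X q = q")
    case True
    then have before_q: "\<forall>k. 1 \<le> k \<and> k < q \<longrightarrow> at X q < at X k"
      by (simp add: PP_self_iff)
    have "at X j < at X k \<and> at X q \<le> at X k" if "1 \<le> k" "k < j" for k
      using after_q[of k] before_q j(3) that by (cases "k < q") auto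
    then have "PP X j = j" and "PC X j = q"
      using PC_eqI_PP_self[of j X q] before_q j assms(1) by (auto simp: PP_self_iff)
    then show ?thesis using j by blast
  next
    case False
    let ?p = "PP X q"
    have P: "1 \<le> ?p" "?p < q" "\<forall>k. ?p < k \<and> k < q \<longrightarrow> at X q < at X k"
      using PP_less[OF False] by auto
    have "prec X ?p j"
      using assms(4) False \<open>j = c \<or> prec X c j\<close> prec_trans by blast
    have "at X j < at X k \<and> at X q \<le> at X k" if "?p < k" "k < j" for k
      using after_q[of k] P(3) j(3) that by (cases "k < q") auto
    then have "PP X j = ?p" and "PC X j = q"
      using PP_eqI[of ?p j X] PC_eqI[of X j ?p q] P j \<open>prec X ?p j\<close> by auto
    then show ?thesis using j by blast
  qed
qed

lemma PC_preimage_towards_range_min: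
  assumes j: "q < j" "PC X j = q"
    and c: "1 \<le> c" "q \<noteq> c" "is_range_min X (min c q) (max c q) c"
  shows "j = c \<or> is_range_min X (min c j) (max c j) c"
proof -
  have j_min: "is_range_min X q j j" using is_range_min_PC[OF j(2,1)] .
  obtain lo where lo: "lo < q" "lo = 0 \<or> 1 \<le> lo \<and> prec X lo j"
    "\<forall>k. lo < k \<and> k < j \<longrightarrow> at X q \<le> at X k"
    "\<forall>k. lo < k \<and> k < q \<longrightarrow> at X q < at X k"
    using PC_less[OF j(2,1)] by blast
  show ?thesis
  proof (cases "c < q")
    case True
    then have c_min: "is_range_min X c q c" using c by (simp add: min_def max_def)
    then have "prec X c q" using c unfolding is_range_min_def by auto
    have "prec X c j"
    proof (cases "lo < c")
      case True
      then have "at X q < at X c" using lo \<open>c < q\<close> by auto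
      then show ?thesis using \<open>prec X c q\<close> unfolding prec_def by auto
    next
      case False
      then have "prec X lo j" "lo = c \<or> prec X c lo"
        using lo c_min c(1) \<open>c < q\<close> unfolding is_range_min_def by (auto simp: not_less)
      then show ?thesis using prec_trans by blast
    qed
    have "prec X c k" if "c \<le> k" "k \<le> j" "k \<noteq> c" for k
    proof (cases "k \<le> q")
      case False
      then have "k = j \<or> prec X j k"
        using j_min that unfolding is_range_min_def by (metis less_imp_le not_le)
      then show ?thesis using \<open>prec X c j\<close> prec_trans by blast
    qed (use c_min that in \<open>auto simp: is_range_min_def\<close>)
    then have "is_range_min X c j c"
      unfolding is_range_min_def using True j by auto
    then show ?thesis using True j by (simp add: min_def max_def)
  next
    case False
    then have "q < c" using c by auto
    then have c_min: "is_range_min X q c c" using c by (simp add: min_def max_def)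
    have "j \<le> c"
    proof (rule ccontr)
      assume "\<not> j \<le> c"
      then have "at X q \<le> at X c" using lo \<open>q < c\<close> by auto
      moreover have "prec X c q" using c_min \<open>q < c\<close> unfolding is_range_min_def by auto
      ultimately show False using \<open>q < c\<close> unfolding prec_def by auto
    qed
    then show ?thesis
      using is_range_min_subrange[OF c_min, of j c] j by (cases "j = c") (auto simp: min_def max_def)
  qed
qed

lemma PP_towards_range_min:
  assumes q: "1 \<le> q" and no_PC: "\<not> (\<exists>j. q < j \<and> j \<le> length X \<and> PC X j = q)"
    and c: "1 \<le> c" "c \<le> length X" "q \<noteq> c" "is_range_min X (min c q) (max c q) c"
  shows "PP X q \<noteq> q" "PP X q = c \<or> is_range_min X (min c (PP X q)) (max c (PP X q)) c"
proof -
  have no_PC_to_right: "\<not> (PP X q = q \<or> prec X (PP X q) c)" if "q < c"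
  proof
    assume "PP X q = q \<or> prec X (PP X q) c"
    moreover have "is_range_min X q c c" using c that by (simp add: min_def max_def)
    ultimately show False
      using PC_preimage_exists[of q c X] q that no_PC c(2) by fastforce
  qed
  show "PP X q \<noteq> q"
  proof
    assume "PP X q = q"
    moreover have "c < q"
      using no_PC_to_right \<open>PP X q = q\<close> c(3) by (meson linorder_neqE_nat)
    moreover have "prec X c q"
      using c \<open>c < q\<close> unfolding is_range_min_def by (auto simp: min_def max_def)
    ultimately show False using c(1) unfolding PP_self_iff prec_def by auto
  qed
  let ?p = "PP X q"
  have p: "1 \<le> ?p" "?p < q" "\<forall>k. ?p < k \<and> k < q \<longrightarrow> at X q < at X k"
    using PP_less[OF \<open>PP X q \<noteq> q\<close>] by auto
  show "?p = c \<or> is_range_min X (min c ?p) (max c ?p) c"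
  proof (cases "c < q")
    case True
    then have c_min: "is_range_min X c q c" using c by (simp add: min_def max_def)
    have "c \<le> ?p"
    proof (rule ccontr)
      assume "\<not> c \<le> ?p"
      then have "at X q < at X c" using p True by auto
      moreover have "prec X c q" using c_min True unfolding is_range_min_def by auto
      ultimately show False unfolding prec_def by auto
    qed
    then show ?thesis
      using is_range_min_subrange[OF c_min, of c ?p] p by (cases "c = ?p") (auto simp: min_def max_def)
  next
    case False
    then have "q < c" using c by auto
    then have c_min: "is_range_min X q c c" using c by (simp add: min_def max_def)
    have "prec X c q" using c_min \<open>q < c\<close> unfolding is_range_min_def by auto
    then have "at X c < at X q" using \<open>q < c\<close> unfolding prec_def by auto
    have "prec X c ?p"
      using no_PC_to_right[OF \<open>q < c\<close>] prec_total[of c ?p X] p(2) \<open>q < c\<close> by auto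
    have "prec X c k" if k: "?p \<le> k" "k < c" for k
    proof -
      consider "k = ?p" | "?p < k" "k < q" | "q \<le> k" using k by linarith
      then show ?thesis
      proof cases
        case 2
        then show ?thesis using p(3) \<open>at X c < at X q\<close> unfolding prec_def by auto
      qed (use \<open>prec X c ?p\<close> c_min k in \<open>auto simp: is_range_min_def\<close>)
    qed
    then have "is_range_min X ?p c c"
      unfolding is_range_min_def using p \<open>q < c\<close> by auto
    then show ?thesis using p \<open>q < c\<close> by (simp add: min_def max_def)
  qed
qed

lemma GP_towards_range_min:
  assumes "1 \<le> q" "q \<le> length X" "1 \<le> c" "c \<le> length X" "q \<noteq> c"
    "is_range_min X (min c q) (max c q) c"
  shows "1 \<le> GP X q" "GP X q \<le> length X" "prec X (GP X q) q"
    "GP X q = c \<or> is_range_min X (min c (GP X q)) (max c (GP X q)) c"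
proof -
  have "1 \<le> GP X q \<and> GP X q \<le> length X \<and> prec X (GP X q) q \<and>
    (GP X q = c \<or> is_range_min X (min c (GP X q)) (max c (GP X q)) c)"
  proof (cases "\<exists>j. q < j \<and> j \<le> length X \<and> PC X j = q")
    case True
    then obtain j where j: "q < j" "j \<le> length X" "PC X j = q" by blast
    have "prec X j q"
      using is_range_min_PC[OF j(3,1)] j(1) unfolding is_range_min_def by auto
    then show ?thesis
      using GP_eqI_PC[OF j] PC_preimage_towards_range_min[OF j(1,3) assms(3,5,6)] j assms(1) by auto
  next
    case False
    note PP = PP_towards_range_min[OF assms(1) False assms(3-6)]
    then show ?thesis
      using GP_eq_PP[OF False] PP_less[OF PP(1)] assms(2) by auto
  qed
  then show "1 \<le> GP X q" "GP X q \<le> length X" "prec X (GP X q) q"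
    "GP X q = c \<or> is_range_min X (min c (GP X q)) (max c (GP X q)) c" by auto
qed

lemma prec_if_GP_condition:
  assumes GP_cond: "\<forall>i. 1 \<le> i \<and> i \<le> length X \<longrightarrow> preceq S (GP X i) i"
    and c: "1 \<le> c" "c \<le> length X"
  shows "1 \<le> q \<Longrightarrow> q \<le> length X \<Longrightarrow> q \<noteq> c \<Longrightarrow> is_range_min X (min c q) (max c q) c \<Longrightarrow> prec S c q"
proof (induction "card {k \<in> {1..length X}. prec X k q}" arbitrary: q rule: less_induct)
  case less
  let ?g = "GP X q"
  note step = GP_towards_range_min[OF less.prems(1,2) c less.prems(3,4)]
  have "?g \<noteq> q" using step(3) prec_irrefl by metis
  then have "prec S ?g q"
    using GP_cond less.prems(1,2) unfolding preceq_def by blast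
  show ?case
  proof (cases "?g = c")
    case False
    have "{k \<in> {1..length X}. prec X k ?g} \<subseteq> {k \<in> {1..length X}. prec X k q}"
      using step(3) prec_trans by blast
    moreover have "?g \<in> {k \<in> {1..length X}. prec X k q} - {k \<in> {1..length X}. prec X k ?g}"
      using step(1-3) prec_irrefl by auto
    ultimately have "{k \<in> {1..length X}. prec X k ?g} \<subset> {k \<in> {1..length X}. prec X k q}"
      by blast
    then have "card {k \<in> {1..length X}. prec X k ?g} < card {k \<in> {1..length X}. prec X k q}"
      by (rule psubset_card_mono[rotated]) simp
    then have "prec S c ?g" using less.hyps[of ?g] step False by auto
    then show ?thesis using \<open>prec S ?g q\<close> prec_trans by blast
  qed (use \<open>prec S ?g q\<close> in simp)
qed

definition preserves_range_mins :: "'a::linorder list \<Rightarrow> 'a list \<Rightarrow> bool" where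
  "preserves_range_mins P S \<longleftrightarrow>
    (\<forall>a b c. 1 \<le> a \<and> b \<le> length P \<and> is_range_min P a b c \<longrightarrow> is_range_min S a b c)"

lemma preserves_range_mins_if_GP_condition:
  assumes "\<forall>i. 1 \<le> i \<and> i \<le> length P \<longrightarrow> preceq S (GP P i) i"
  shows "preserves_range_mins P S"
  unfolding preserves_range_mins_def
proof (intro allI impI)
  fix a b c assume abc: "1 \<le> a \<and> b \<le> length P \<and> is_range_min P a b c"
  have "prec S c k" if "a \<le> k" "k \<le> b" "k \<noteq> c" for k
  proof (rule prec_if_GP_condition[OF assms])
    show "is_range_min P (min c k) (max c k) c"
      using abc that is_range_min_subrange[of P a b c]
      by (auto simp: min_def max_def is_range_min_def)
  qed (use abc that in \<open>auto simp: is_range_min_def\<close>)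
  then show "is_range_min S a b c"
    using abc unfolding is_range_min_def by auto
qed

lemma GP_condition_if_preserves_range_mins:
  assumes "preserves_range_mins P S"
  shows "\<forall>i. 1 \<le> i \<and> i \<le> length P \<longrightarrow> preceq S (GP P i) i"
proof (intro allI impI)
  fix i assume i: "1 \<le> i \<and> i \<le> length P"
  show "preceq S (GP P i) i"
  proof (cases "GP P i = i")
    case False
    note GP = is_range_min_GP[of i P, OF conjunct1[OF i] conjunct2[OF i] False]
    then have "is_range_min S (min i (GP P i)) (max i (GP P i)) (GP P i)"
      using assms i unfolding preserves_range_mins_def by (auto simp: min_def max_def)
    then show ?thesis using False unfolding is_range_min_def preceq_def by auto
  qed (simp add: preceq_def)
qed

lemma size_CT: "size (CT X) = length X"
proof (induction "length X" arbitrary: X rule: less_induct)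
  case less
  show ?case
  proof (cases "X = []")
    case False
    then have "minidx X < length X" by (rule minidx_less)
    then show ?thesis using less False by (subst CT.simps) auto
  qed (simp add: CT.simps)
qed

lemma CT_eq_iff:
  assumes "X \<noteq> []" "Y \<noteq> []"
  shows "CT X = CT Y \<longleftrightarrow> minidx Y = minidx X \<and>
    CT (take (minidx X) X) = CT (take (minidx X) Y) \<and>
    CT (drop (Suc (minidx X)) X) = CT (drop (Suc (minidx X)) Y)"
proof -
  have "size (CT (take (minidx X) X)) = minidx X" "size (CT (take (minidx Y) Y)) = minidx Y"
    using minidx_less[OF assms(1)] minidx_less[OF assms(2)] by (simp_all add: size_CT)
  then show ?thesis using assms by (subst (1 2) CT.simps) auto
qed

lemma is_range_min_minidx:
  assumes "X \<noteq> []"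
  shows "is_range_min X 1 (length X) (Suc (minidx X))"
proof -
  let ?Q = "\<lambda>k. k < length X \<and> (\<forall>j < length X. X ! k \<le> X ! j)"
  have "Min (set X) \<in> set X" using assms by simp
  then obtain k where "k < length X" "X ! k = Min (set X)" by (auto simp: in_set_conv_nth)
  then have "?Q k" by simp
  then have Q: "?Q (minidx X)"
    unfolding minidx_def by (rule LeastI)
  have less: "X ! minidx X < X ! j" if "j < minidx X" for j
  proof -
    have "\<not> ?Q j" using not_less_Least[OF that[unfolded minidx_def]] unfolding minidx_def .
    moreover have "j < length X" using that Q by simp
    ultimately obtain i where "i < length X" "X ! i < X ! j" by (auto simp: not_le)
    then show ?thesis using Q by (meson order.strict_trans1)
  qed
  show ?thesis
    unfolding is_range_min_def
  proof (intro conjI allI impI)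
    fix k assume k: "1 \<le> k \<and> k \<le> length X \<and> k \<noteq> Suc (minidx X)"
    show "prec X (Suc (minidx X)) k"
    proof (cases "k < Suc (minidx X)")
      case True
      then show ?thesis using less[of "k - 1"] k unfolding prec_def at_def by auto
    next
      case False
      then have "X ! minidx X \<le> X ! (k - 1)" using Q k by auto
      then show ?thesis using False k unfolding prec_def at_def by auto
    qed
  qed (use Q in auto)
qed

lemma is_range_min_take:
  assumes "1 \<le> a" "b \<le> k"
  shows "is_range_min (take k X) a b c \<longleftrightarrow> is_range_min X a b c"
proof -
  have "prec (take k X) x y \<longleftrightarrow> prec X x y" if "a \<le> x" "x \<le> b" "a \<le> y" "y \<le> b" for x y
    using that assms unfolding prec_def at_def by auto
  then show ?thesis unfolding is_range_min_def by (metis le_trans)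
qed

lemma is_range_min_drop:
  assumes "1 \<le> a" "r \<le> length X"
  shows "is_range_min (drop r X) a b c \<longleftrightarrow> is_range_min X (a + r) (b + r) (c + r)"
proof -
  have prec_drop: "prec (drop r X) x y \<longleftrightarrow> prec X (x + r) (y + r)" if "1 \<le> x" "1 \<le> y" for x y
    using that assms unfolding prec_def at_def by (auto simp: nth_drop add.commute)
  have shift: "(\<forall>k. a + r \<le> k \<and> k \<le> b + r \<and> k \<noteq> c + r \<longrightarrow> P k) \<longleftrightarrow>
      (\<forall>k. a \<le> k \<and> k \<le> b \<and> k \<noteq> c \<longrightarrow> P (k + r))" for P
  proof
    assume shifted: "\<forall>k. a \<le> k \<and> k \<le> b \<and> k \<noteq> c \<longrightarrow> P (k + r)"
    show "\<forall>k. a + r \<le> k \<and> k \<le> b + r \<and> k \<noteq> c + r \<longrightarrow> P k"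
    proof (intro allI impI)
      fix k assume "a + r \<le> k \<and> k \<le> b + r \<and> k \<noteq> c + r"
      then have "a \<le> k - r \<and> k - r \<le> b \<and> k - r \<noteq> c" "k - r + r = k" by auto
      then show "P k" using shifted by metis
    qed
  qed auto
  show ?thesis
    unfolding is_range_min_def shift using prec_drop assms(1) by auto
qed

lemma preserves_range_mins_take:
  assumes "preserves_range_mins P S"
  shows "preserves_range_mins (take k P) (take k S)"
  unfolding preserves_range_mins_def
proof (intro allI impI)
  fix a b c assume abc: "1 \<le> a \<and> b \<le> length (take k P) \<and> is_range_min (take k P) a b c"
  then have "b \<le> k" "b \<le> length P" by auto
  then have "is_range_min S a b c"
    using assms abc is_range_min_take[of a b k P c] unfolding preserves_range_mins_def by blast
  then show "is_range_min (take k S) a b c"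
    using is_range_min_take[of a b k S c] abc \<open>b \<le> k\<close> by blast
qed

lemma preserves_range_mins_drop:
  assumes "preserves_range_mins P S" "r \<le> length P" "r \<le> length S"
  shows "preserves_range_mins (drop r P) (drop r S)"
  unfolding preserves_range_mins_def
proof (intro allI impI)
  fix a b c assume abc: "1 \<le> a \<and> b \<le> length (drop r P) \<and> is_range_min (drop r P) a b c"
  then have "is_range_min P (a + r) (b + r) (c + r)" "b + r \<le> length P"
    using is_range_min_drop[of a r P b c] assms(2) by auto
  then have "is_range_min S (a + r) (b + r) (c + r)"
    using assms(1) abc unfolding preserves_range_mins_def by auto
  then show "is_range_min (drop r S) a b c"
    using is_range_min_drop[of a r S b c] abc assms(3) by blast
qed

lemma minidx_eq_if_preserves_range_mins:
  assumes "P \<noteq> []" "length P = length S" "preserves_range_mins P S"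
  shows "minidx S = minidx P"
proof -
  have "S \<noteq> []" using assms by auto
  have "is_range_min S 1 (length S) (Suc (minidx P))"
    using assms is_range_min_minidx[OF assms(1)] unfolding preserves_range_mins_def by auto
  then show ?thesis
    using is_range_min_unique is_range_min_minidx[OF \<open>S \<noteq> []\<close>] by fastforce
qed

lemma preserves_range_minsI:
  assumes "P \<noteq> []" "length P = length S" "minidx S = minidx P"
    and left: "preserves_range_mins (take (minidx P) P) (take (minidx P) S)"
    and right: "preserves_range_mins (drop (Suc (minidx P)) P) (drop (Suc (minidx P)) S)"
  shows "preserves_range_mins P S"
  unfolding preserves_range_mins_def
proof (intro allI impI)
  let ?r = "Suc (minidx P)"
  have "minidx P < length P" using minidx_less[OF assms(1)] .
  fix a b c assume abc: "1 \<le> a \<and> b \<le> length P \<and> is_range_min P a b c"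
  consider "a \<le> ?r" "?r \<le> b" | "b < ?r" | "?r < a" by linarith
  then show "is_range_min S a b c"
  proof cases
    case 1
    have "is_range_min P a b ?r"
      using is_range_min_subrange[OF is_range_min_minidx[OF assms(1)], of a b] 1 abc by auto
    then have "c = ?r" using is_range_min_unique abc by blast
    moreover have "S \<noteq> []" using assms by auto
    ultimately show ?thesis
      using is_range_min_subrange[OF is_range_min_minidx[of S], of a b] 1 abc assms(2,3) by auto
  next
    case 2
    then have "is_range_min (take (minidx P) P) a b c"
      using is_range_min_take[of a b "minidx P" P c] abc by auto
    then have "is_range_min (take (minidx P) S) a b c"
      using left abc 2 \<open>minidx P < length P\<close> unfolding preserves_range_mins_def by auto
    then show ?thesis using is_range_min_take[of a b "minidx P" S c] abc 2 by auto
  next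
    case 3
    moreover have "a \<le> c" "c \<le> b" using abc unfolding is_range_min_def by auto
    ultimately obtain a' b' c' where shifted: "a = a' + ?r" "b = b' + ?r" "c = c' + ?r" "1 \<le> a'"
      by (intro that[of "a - ?r" "b - ?r" "c - ?r"]) auto
    then have "is_range_min (drop ?r P) a' b' c'"
      using is_range_min_drop[of a' ?r P b' c'] abc \<open>minidx P < length P\<close> by auto
    then have "is_range_min (drop ?r S) a' b' c'"
      using right abc shifted unfolding preserves_range_mins_def by auto
    then show ?thesis
      using is_range_min_drop[of a' ?r S b' c'] shifted \<open>minidx P < length P\<close> assms(2) by auto
  qed
qed

lemma CT_eq_iff_preserves_range_mins:
  "length P = length S \<Longrightarrow> CT P = CT S \<longleftrightarrow> preserves_range_mins P S"
proof (induction "length P" arbitrary: P S rule: less_induct)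
  case less
  show ?case
  proof (cases "P = []")
    case True
    then show ?thesis
      using less.prems unfolding preserves_range_mins_def is_range_min_def by simp
  next
    case False
    let ?k = "minidx P"
    have "S \<noteq> []" using False less.prems by auto
    have "?k < length P" using minidx_less[OF False] .
    have IH: "CT (take ?k P) = CT (take ?k S) \<longleftrightarrow> preserves_range_mins (take ?k P) (take ?k S)"
      "CT (drop (Suc ?k) P) = CT (drop (Suc ?k) S) \<longleftrightarrow>
        preserves_range_mins (drop (Suc ?k) P) (drop (Suc ?k) S)"
      using less \<open>?k < length P\<close> by auto
    show ?thesis
      unfolding CT_eq_iff[OF False \<open>S \<noteq> []\<close>] IH
      using preserves_range_minsI[OF False less.prems] minidx_eq_if_preserves_range_mins[OF False less.prems]
        preserves_range_mins_take preserves_range_mins_drop[of P S "Suc ?k"]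
        \<open>?k < length P\<close> less.prems by auto
  qed
qed

theorem theorem3:
  fixes P S :: "'a::linorder list" and m :: nat
  assumes "length P = m" and "length S = m"
  shows "CT P = CT S \<longleftrightarrow> (\<forall>i. 1 \<le> i \<and> i \<le> m \<longrightarrow> preceq S (GP P i) i)"
proof -
  have "CT P = CT S \<longleftrightarrow> preserves_range_mins P S"
    using assms by (simp add: CT_eq_iff_preserves_range_mins)
  also have "\<dots> \<longleftrightarrow> (\<forall>i. 1 \<le> i \<and> i \<le> length P \<longrightarrow> preceq S (GP P i) i)"
    using preserves_range_mins_if_GP_condition GP_condition_if_preserves_range_mins by blast
  finally show ?thesis using assms(1) by simp
qed

end
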